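(* Let $X$ be a Hausdorff space. Assume there is $K\in\mathcal{K}(X)$ such that every clopen subset $U$ of $X$ with $K\subset U$ satisfies $U=X$. Then $\mathcal{C}=\{K\cup\{x\}:x\in X\}$ is a connected subset of $\mathcal{K}(X)$.
   Context: $\mathcal{K}(X)$ is the set of nonempty compact subsets of $X$ with the Vietoris topology (generated by $U^+=\{A: A\subset U\}$ and $U^-=\{A: A\cap U\neq\emptyset\}$ for $U$ open in $X$). *)

theory Defs
  imports "HOL-Analysis.Analysis"
begin

definition compact_sets :: "'a topology \<Rightarrow> 'a set set" where
  "compact_sets X = {A. A \<noteq> {} \<and> compactin X A}"

definition vupper :: "'a set \<Rightarrow> 'a set set" where
  "vupper U = {A. A \<subseteq> U}"

definition vlower :: "'a set \<Rightarrow> 'a set set" where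
  "vlower U = {A. A \<inter> U \<noteq> {}}"

definition vietoris :: "'a topology \<Rightarrow> 'a set topology" where
  "vietoris X = subtopology
     (topology_generated_by ({vupper U | U. openin X U} \<union> {vlower U | U. openin X U}))
     (compact_sets X)"

end

theory Submission
  imports Defs
begin

text \<open>The map \<open>x \<mapsto> K \<union> {x}\<close> is continuous from X into K(X): the preimage of \<open>U\<^sup>+\<close> is U or
  empty, and that of \<open>U\<^sup>-\<close> is U or all of X, according to the position of K relative to U.
  It is constant on K, and any clopen subset of its image containing K pulls back to a clopen
  subset of X containing K, which must be X itself. Hence the image has no nontrivial clopen
  subsets.\<close>

lemma compact_sets_Un_singleton:
  assumes "compactin X K" "x \<in> topspace X"
  shows "K \<union> {x} \<in> compact_sets X"
  using assms compactin_Un[of X K "{x}"] by (simp add: compact_sets_def)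

lemma continuous_map_vietoris:
  assumes "g ` topspace Y \<subseteq> compact_sets X"
    and "\<And>U. openin X U \<Longrightarrow> openin Y {y \<in> topspace Y. g y \<subseteq> U}"
    and "\<And>U. openin X U \<Longrightarrow> openin Y {y \<in> topspace Y. g y \<inter> U \<noteq> {}}"
  shows "continuous_map Y (vietoris X) g"
proof -
  define S where "S = {vupper U | U. openin X U} \<union> {vlower U | U. openin X U}"
  have "continuous_map Y (topology_generated_by S) g"
  proof (rule continuous_on_generated_topo)
    fix W assume "W \<in> S"
    then obtain U where U: "openin X U" "W = vupper U \<or> W = vlower U"
      by (auto simp: S_def)
    have "g -` vupper U \<inter> topspace Y = {y \<in> topspace Y. g y \<subseteq> U}"
      and "g -` vlower U \<inter> topspace Y = {y \<in> topspace Y. g y \<inter> U \<noteq> {}}"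
      by (auto simp: vupper_def vlower_def)
    then show "openin Y (g -` W \<inter> topspace Y)"
      using U assms(2,3)[OF U(1)] by metis
  next
    have "vupper (topspace X) \<in> S"
      by (auto simp: S_def)
    moreover have "g ` topspace Y \<subseteq> vupper (topspace X)"
      using assms(1) by (auto simp: compact_sets_def vupper_def dest!: compactin_subset_topspace)
    ultimately show "g ` topspace Y \<subseteq> \<Union> S"
      by blast
  qed
  then show ?thesis
    using assms(1)
    by (simp add: vietoris_def S_def continuous_map_in_subtopology image_subset_iff_funcset)
qed

lemma continuous_map_vietoris_Un_singleton:
  assumes "compactin X K"
  shows "continuous_map X (vietoris X) (\<lambda>x. K \<union> {x})"
proof (rule continuous_map_vietoris)
  show "(\<lambda>x. K \<union> {x}) ` topspace X \<subseteq> compact_sets X"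
    using compact_sets_Un_singleton[OF assms] by blast
next
  fix U assume U: "openin X U"
  then have UX: "U \<subseteq> topspace X"
    by (rule openin_subset)
  show "openin X {x \<in> topspace X. K \<union> {x} \<subseteq> U}"
  proof (cases "K \<subseteq> U")
    case True
    then have "{x \<in> topspace X. K \<union> {x} \<subseteq> U} = U"
      using UX by blast
    then show ?thesis
      using U by simp
  qed simp
  show "openin X {x \<in> topspace X. (K \<union> {x}) \<inter> U \<noteq> {}}"
  proof (cases "K \<inter> U = {}")
    case True
    then have "{x \<in> topspace X. (K \<union> {x}) \<inter> U \<noteq> {}} = U"
      using UX by blast
    then show ?thesis
      using U by simp
  qed simp
qed

lemma connectedin_continuous_map_image_constant_on:
  assumes f: "continuous_map X Y f"
    and S: "S \<subseteq> topspace X" "S \<noteq> {}" "\<And>x. x \<in> S \<Longrightarrow> f x = b"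
    and clopen: "\<And>U. openin X U \<Longrightarrow> closedin X U \<Longrightarrow> S \<subseteq> U \<Longrightarrow> U = topspace X"
  shows "connectedin Y (f ` topspace X)"
proof -
  define Z where "Z = subtopology Y (f ` topspace X)"
  have fZ: "continuous_map X Z f"
    using f by (simp add: Z_def continuous_map_in_subtopology)
  have topZ: "topspace Z = f ` topspace X"
    using f by (auto simp: Z_def continuous_map_image_subset_topspace inf.absorb2)
  have b: "b \<in> topspace Z"
    using S topZ by force
  have full: "T = topspace Z" if "openin Z T" "closedin Z T" "b \<in> T" for T
  proof -
    have "{x \<in> topspace X. f x \<in> T} = topspace X"
      using that S
      by (intro clopen openin_continuous_map_preimage[OF fZ] closedin_continuous_map_preimage[OF fZ])
         auto
    then show ?thesis
      using openin_subset[OF \<open>openin Z T\<close>] topZ by auto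
  qed
  have "connected_space Z"
    unfolding connected_space_clopen_in
  proof (intro allI impI)
    fix T assume T: "openin Z T \<and> closedin Z T"
    show "T = {} \<or> T = topspace Z"
    proof (cases "b \<in> T")
      case True
      then show ?thesis using T full by blast
    next
      case False
      then have "topspace Z - T = topspace Z"
        using T b by (intro full) auto
      then show ?thesis
        using T openin_subset by blast
    qed
  qed
  then show ?thesis
    using continuous_map_image_subset_topspace[OF f] by (simp add: connectedin_def Z_def)
qed

theorem lemma5p1:
  fixes X :: "'a topology" and K :: "'a set"
  assumes "Hausdorff_space X"
    and "K \<in> compact_sets X"
    and "\<And>U. openin X U \<Longrightarrow> closedin X U \<Longrightarrow> K \<subseteq> U \<Longrightarrow> U = topspace X"
  shows "(\<lambda>x. K \<union> {x}) ` topspace X \<subseteq> compact_sets X \<and>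
         connectedin (vietoris X) ((\<lambda>x. K \<union> {x}) ` topspace X)"
proof
  have K: "compactin X K" "K \<noteq> {}"
    using assms(2) by (auto simp: compact_sets_def)
  show "(\<lambda>x. K \<union> {x}) ` topspace X \<subseteq> compact_sets X"
    using compact_sets_Un_singleton[OF K(1)] by blast
  show "connectedin (vietoris X) ((\<lambda>x. K \<union> {x}) ` topspace X)"
  proof (rule connectedin_continuous_map_image_constant_on)
    show "continuous_map X (vietoris X) (\<lambda>x. K \<union> {x})"
      using continuous_map_vietoris_Un_singleton[OF K(1)] .
    show "K \<subseteq> topspace X"
      using K compactin_subset_topspace by blast
    show "\<And>x. x \<in> K \<Longrightarrow> K \<union> {x} = K"
      by blast
  qed (use K assms(3) in blast)+
qed

end
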